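(* Let $D=\{\alpha_1,\dots,\alpha_r\}\subset(0,1)$, viewed in $\mathbb{T}=\mathbb{R}/\mathbb{Z}$, be such that $\{1,\alpha_1,\dots,\alpha_r\}$ is linearly independent over $\mathbb{Q}$. Then $\mathrm{Md}_{\mathbb{T}}(D)=1/2$, and no Borel $D$-avoiding set $A\subset\mathbb{T}$ satisfies $\mu(A)=1/2$.
   Context: $\mu$ is Haar probability measure on $\mathbb{T}$; $A$ is $D$-avoiding if $(A-A)\cap D=\emptyset$. $\mathrm{Md}_{\mathbb{T}}(D)=\sup\{\mu(A): A\subset\mathbb{T}\text{ Borel},\ (A-A)\cap D=\emptyset\}$. *)

theory Defs
  imports "HOL-Analysis.Analysis"
begin

text \<open>The circle group T = R/Z is represented by the fundamental domain [0,1);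
  the difference of two points x, y of T is represented by frac (x - y), and
  Haar probability measure on T is Lebesgue measure restricted to [0,1).
  A subset D of (0,1) is thereby viewed as a subset of T.\<close>

definition torus_avoiding :: "real set \<Rightarrow> real set \<Rightarrow> bool" where
  "torus_avoiding D A \<longleftrightarrow>
     A \<in> sets borel \<and> A \<subseteq> {0..<1} \<and> (\<forall>x\<in>A. \<forall>y\<in>A. frac (x - y) \<notin> D)"

definition Md_T :: "real set \<Rightarrow> real" where
  "Md_T D = Sup {measure lborel A | A. torus_avoiding D A}"

definition one_Q_lin_indep :: "real set \<Rightarrow> bool" where
  "one_Q_lin_indep D \<longleftrightarrow>
     (\<forall>(c0::rat) (c::real \<Rightarrow> rat).
        of_rat c0 + (\<Sum>a\<in>D. of_rat (c a) * a) = 0 \<longrightarrow> c0 = 0 \<and> (\<forall>a\<in>D. c a = 0))"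

end

theory Submission
  imports Defs
begin

text \<open>Upper bound: a set A avoiding some irrational \<alpha> \<in> D is disjoint from its rotation
  A + \<alpha>, so 2 \<mu>(A) \<le> 1. If \<mu>(A) = 1/2, then A + \<alpha> is almost everywhere the complement of A,
  hence A + n\<alpha> is almost everywhere A or its complement according to the parity of n.
  Choosing an odd n for which n\<alpha> mod 1 is a small positive number s makes A \<inter> (A + s) null,
  contradicting Steinhaus' theorem.

  Lower bound: by Kronecker's theorem there is K > 0 with K\<alpha> within \<epsilon> of 1/2 modulo 1 for
  every \<alpha> \<in> D; then {x. frac (K x) < 1/2 - \<epsilon>} avoids D and has measure 1/2 - \<epsilon>.\<close>

lemma Steinhaus:
  fixes A :: "'a::euclidean_space set"
  assumes A: "A \<in> lmeasurable" "bounded A" and pos: "0 < measure lebesgue A"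
  obtains \<eta> where "\<eta> > 0" "\<And>s. norm s < \<eta> \<Longrightarrow> 0 < measure lebesgue (A \<inter> (+) s ` A)"
proof -
  define \<delta> where "\<delta> = measure lebesgue A / 3"
  have "\<delta> > 0" using pos by (simp add: \<delta>_def)
  have A_sets: "A \<in> sets lebesgue" using A(1) by blast
  obtain U where U: "open U" "A \<subseteq> U" "U - A \<in> lmeasurable" "emeasure lebesgue (U - A) < \<delta>"
    using sets_lebesgue_outer_open[OF A_sets \<open>\<delta> > 0\<close>] .
  obtain K where K: "closed K" "K \<subseteq> A" "A - K \<in> lmeasurable" "emeasure lebesgue (A - K) < \<delta>"
    using sets_lebesgue_inner_closed[OF A_sets \<open>\<delta> > 0\<close>] .
  have "compact K" using K(1,2) A(2) by (meson bounded_subset compact_eq_bounded_closed)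
  then obtain \<eta> where "\<eta> > 0" and \<eta>: "(\<Union>x\<in>K. ball x \<eta>) \<subseteq> U"
    using compact_subset_open_imp_ball_epsilon_subset K(2) U(1,2) by (metis order_trans)
  have U_lm: "U \<in> lmeasurable"
    using fmeasurable.Un[OF A(1) U(3)] U(2) by (simp add: Un_absorb1)
  have K_lm: "K \<in> lmeasurable"
    using \<open>compact K\<close> by (rule lmeasurable_compact)
  have "measure lebesgue U = measure lebesgue A + measure lebesgue (U - A)"
    using measure_Un2[OF A(1) U(3)] U(2) by (simp add: Un_absorb1)
  moreover have "measure lebesgue (U - A) < \<delta>"
    using U(3,4) \<open>\<delta> > 0\<close> by (simp add: emeasure_eq_measure2 ennreal_less_iff)
  moreover have "measure lebesgue A = measure lebesgue K + measure lebesgue (A - K)"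
    using measure_Un2[OF K_lm A(1)] K(2) by (simp add: Un_absorb1)
  moreover have "measure lebesgue (A - K) < \<delta>"
    using K(3,4) \<open>\<delta> > 0\<close> by (simp add: emeasure_eq_measure2 ennreal_less_iff)
  ultimately have gap: "measure lebesgue U < 2 * measure lebesgue K"
    by (simp add: \<delta>_def)
  show thesis
  proof
    show "\<eta> > 0" by fact
    fix s :: 'a assume "norm s < \<eta>"
    have "(+) s ` K \<subseteq> U"
    proof
      fix y assume "y \<in> (+) s ` K"
      then obtain x where "x \<in> K" "y = s + x" by blast
      with \<open>norm s < \<eta>\<close> have "y \<in> ball x \<eta>" by (simp add: dist_norm)
      with \<eta> \<open>x \<in> K\<close> show "y \<in> U" by blast
    qed
    have Ks_lm: "(+) s ` K \<in> lmeasurable" using K_lm by (rule measurable_translation)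
    have "measure lebesgue (K \<union> (+) s ` K) \<le> measure lebesgue U"
      using \<open>(+) s ` K \<subseteq> U\<close> K(2) U(2) K_lm Ks_lm U_lm
      by (intro measure_mono_fmeasurable) auto
    then have "0 < measure lebesgue (K \<inter> (+) s ` K)"
      using measure_Un3[OF K_lm Ks_lm] gap by (simp add: measure_translation)
    also have "\<dots> \<le> measure lebesgue (A \<inter> (+) s ` A)"
      using K(2) K_lm Ks_lm A(1) measurable_translation[OF A(1)]
      by (intro measure_mono_fmeasurable) auto
    finally show "0 < measure lebesgue (A \<inter> (+) s ` A)" .
  qed
qed

section \<open>Rotations of the circle\<close>

lemma mem_translation_image: "y \<in> (+) c ` S \<longleftrightarrow> y - c \<in> (S :: 'a::ab_group_add set)"
  by (metis add_diff_cancel_left' diff_add_cancel image_iff add.commute)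

lemma frac_frac_diff: "frac (frac x - y) = frac (x - y)"
proof -
  have "frac x - y = (x - y) + of_int (- \<lfloor>x\<rfloor>)" by (simp add: frac_def)
  then show ?thesis by (simp only: frac_add_of_int_right)
qed

definition torus_translate :: "real \<Rightarrow> real set \<Rightarrow> real set" where
  "torus_translate t A = {y \<in> {0..<1}. frac (y - t) \<in> A}"

lemma torus_translate_frac: "torus_translate (frac t) A = torus_translate t A"
  by (simp add: torus_translate_def frac_diff_simp)

lemma torus_translate_eq_Un:
  assumes "A \<subseteq> {0..<1}" "0 \<le> t" "t < 1"
  shows "torus_translate t A = (+) t ` (A \<inter> {..<1 - t}) \<union> (+) (t - 1) ` (A \<inter> {1 - t..})"
proof -
  have "y \<in> torus_translate t A \<longleftrightarrow> y - t \<in> A \<inter> {..<1 - t} \<or> y - (t - 1) \<in> A \<inter> {1 - t..}" for y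
  proof (cases "t \<le> y")
    case True
    then show ?thesis using assms by (auto simp: torus_translate_def frac_eq)
  next
    case False
    have "frac (y - t) = y - (t - 1)" if "0 \<le> y"
    proof -
      have "y - t - (y - (t - 1)) = - 1" by simp
      then show ?thesis using False that assms by (simp add: frac_unique_iff)
    qed
    moreover have "y - t \<notin> A" using False assms by auto
    ultimately show ?thesis using False assms by (auto simp: torus_translate_def)
  qed
  then show ?thesis by (simp add: set_eq_iff mem_translation_image)
qed

lemma torus_translate_measure:
  assumes A: "A \<in> lmeasurable" "A \<subseteq> {0..<1}"
  shows "torus_translate t A \<in> lmeasurable" "measure lebesgue (torus_translate t A) = measure lebesgue A"
proof -
  define \<alpha> where "\<alpha> = frac t"
  have \<alpha>: "0 \<le> \<alpha>" "\<alpha> < 1" by (simp_all add: \<alpha>_def frac_lt_1)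
  define L where "L = A \<inter> {..<1 - \<alpha>}"
  define R where "R = A \<inter> {1 - \<alpha>..}"
  have L: "L \<in> lmeasurable" unfolding L_def by (rule fmeasurable_Int_fmeasurable[OF A(1)]) simp
  have R: "R \<in> lmeasurable" unfolding R_def by (rule fmeasurable_Int_fmeasurable[OF A(1)]) simp
  have "measure lebesgue A = measure lebesgue L + measure lebesgue R"
  proof -
    have "A = L \<union> R" "L \<inter> R = {}" by (auto simp: L_def R_def)
    then show ?thesis using measure_Un3[OF L R] by simp
  qed
  have eq: "torus_translate t A = (+) \<alpha> ` L \<union> (+) (\<alpha> - 1) ` R"
    using torus_translate_eq_Un[OF A(2) \<alpha>] torus_translate_frac[of t A]
    by (simp add: L_def R_def \<alpha>_def)
  have "(+) \<alpha> ` L \<subseteq> {\<alpha>..}" "(+) (\<alpha> - 1) ` R \<subseteq> {..<\<alpha>}"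
    using A(2) by (auto simp: L_def R_def)
  then have "(+) \<alpha> ` L \<inter> (+) (\<alpha> - 1) ` R = {}" by fastforce
  moreover have Lt: "(+) \<alpha> ` L \<in> lmeasurable" and Rt: "(+) (\<alpha> - 1) ` R \<in> lmeasurable"
    using L R by (simp_all add: measurable_translation)
  ultimately show "torus_translate t A \<in> lmeasurable"
    "measure lebesgue (torus_translate t A) = measure lebesgue A"
    using measure_Un3[OF Lt Rt] fmeasurable.Un[OF Lt Rt] \<open>measure lebesgue A = _\<close>
    by (simp_all add: eq measure_translation)
qed

lemma torus_avoiding_mono: "torus_avoiding D A \<Longrightarrow> D' \<subseteq> D \<Longrightarrow> torus_avoiding D' A"
  by (auto simp: torus_avoiding_def)

lemma torus_avoiding_measurable:
  assumes "torus_avoiding D A"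
  shows "A \<in> lmeasurable" "bounded A" "measure lborel A = measure lebesgue A"
proof -
  have "A \<in> sets borel" "A \<subseteq> {0..1}" using assms by (auto simp: torus_avoiding_def)
  moreover from this have "bounded A" by (meson bounded_closed_interval bounded_subset)
  ultimately show "A \<in> lmeasurable" "bounded A" "measure lborel A = measure lebesgue A"
    by (auto intro: bounded_set_imp_lmeasurable)
qed

lemma torus_avoiding_singleton_disjoint:
  assumes "torus_avoiding {\<alpha>} A" "0 \<le> \<alpha>" "\<alpha> < 1"
  shows "A \<inter> torus_translate \<alpha> A = {}"
proof (rule ccontr)
  assume "A \<inter> torus_translate \<alpha> A \<noteq> {}"
  then obtain y where "y \<in> A" "frac (y - \<alpha>) \<in> A" by (auto simp: torus_translate_def)
  moreover have "frac (y - frac (y - \<alpha>)) = \<alpha>"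
    using assms(2,3) by (simp add: frac_diff_simp frac_eq)
  ultimately show False using assms(1) by (force simp: torus_avoiding_def)
qed

lemma torus_avoiding_singleton_Un:
  assumes "torus_avoiding {\<alpha>} A" "0 \<le> \<alpha>" "\<alpha> < 1"
  defines "B \<equiv> A \<union> torus_translate \<alpha> A"
  shows "B \<in> lmeasurable" "B \<subseteq> {0..<1}" "measure lebesgue B = 2 * measure lebesgue A"
proof -
  have A: "A \<in> lmeasurable" "A \<subseteq> {0..<1}"
    using assms(1) torus_avoiding_measurable by (auto simp: torus_avoiding_def)
  have "A \<inter> torus_translate \<alpha> A = {}" by (rule torus_avoiding_singleton_disjoint[OF assms(1-3)])
  moreover note T = torus_translate_measure[OF A, of \<alpha>]
  ultimately show "B \<in> lmeasurable" "B \<subseteq> {0..<1}" "measure lebesgue B = 2 * measure lebesgue A"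
    using measure_Un3[OF A(1) T(1)] fmeasurable.Un[OF A(1) T(1)] A(2)
    by (auto simp: B_def torus_translate_def)
qed

lemma measure_torus_avoiding_singleton_le:
  assumes "torus_avoiding {\<alpha>} A" "0 \<le> \<alpha>" "\<alpha> < 1"
  shows "measure lebesgue A \<le> 1/2"
proof -
  have "measure lebesgue (A \<union> torus_translate \<alpha> A) \<le> measure lebesgue {0..1::real}"
    using torus_avoiding_singleton_Un[OF assms] by (intro measure_mono_fmeasurable) auto
  then show ?thesis using torus_avoiding_singleton_Un[OF assms] by simp
qed

lemma AE_lebesgue_translate:
  fixes a :: "'a::euclidean_space"
  assumes "AE x in lebesgue. P x"
  shows "AE x in lebesgue. P (x - a)"
proof -
  obtain N where "negligible N" "{x. \<not> P x} \<subseteq> N"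
    using assms unfolding eventually_ae_filter_negligible by blast
  then have "negligible ((+) a ` N)" "{x. \<not> P (x - a)} \<subseteq> (+) a ` N"
    by (auto simp: negligible_translation mem_translation_image)
  then show ?thesis unfolding eventually_ae_filter_negligible by blast
qed

lemma negligible_frac_vimage:
  assumes "negligible N"
  shows "negligible {y::real. frac y \<in> N}"
proof -
  have "{y. frac y \<in> N} \<subseteq> (\<Union>n::int. (+) (of_int n) ` N)"
    by (auto simp: mem_translation_image frac_def)
  moreover have "negligible (\<Union>n::int. (+) (of_int n) ` N)"
    using assms by (intro negligible_countable_Union) (auto simp: negligible_translation)
  ultimately show ?thesis by (metis negligible_subset)
qed

section \<open>Sets avoiding a single irrational difference\<close>

lemma AE_torus_avoiding_complement:
  assumes "torus_avoiding {\<alpha>} A" "0 \<le> \<alpha>" "\<alpha> < 1" "measure lebesgue A = 1/2"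
  shows "AE y in lebesgue. frac (y - \<alpha>) \<in> A \<longleftrightarrow> frac y \<notin> A"
proof -
  define B where "B = A \<union> torus_translate \<alpha> A"
  note B = torus_avoiding_singleton_Un[OF assms(1-3), folded B_def]
  have "measure lebesgue ({0..1} - B) = 0"
    using B assms(4) by (subst measure_Diff) auto
  then have "negligible {y. frac y \<in> {0..1} - B}"
    using B(1) by (intro negligible_frac_vimage) (simp add: negligible_iff_measure0 fmeasurable_Diff)
  moreover have "{y. \<not> (frac (y - \<alpha>) \<in> A \<longleftrightarrow> frac y \<notin> A)} \<subseteq> {y. frac y \<in> {0..1} - B}"
  proof
    fix y assume "y \<in> {y. \<not> (frac (y - \<alpha>) \<in> A \<longleftrightarrow> frac y \<notin> A)}"
    moreover have "frac y \<in> torus_translate \<alpha> A \<longleftrightarrow> frac (y - \<alpha>) \<in> A"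
      by (simp add: torus_translate_def frac_lt_1 frac_frac_diff)
    ultimately have "frac y \<notin> B"
      using torus_avoiding_singleton_disjoint[OF assms(1-3)] by (auto simp: B_def)
    then show "y \<in> {y. frac y \<in> {0..1} - B}" by (simp add: less_imp_le[OF frac_lt_1])
  qed
  ultimately show ?thesis unfolding eventually_ae_filter_negligible by blast
qed

lemma AE_torus_avoiding_parity:
  assumes "torus_avoiding {\<alpha>} A" "0 \<le> \<alpha>" "\<alpha> < 1" "measure lebesgue A = 1/2"
  shows "AE y in lebesgue. frac (y - real n * \<alpha>) \<in> A \<longleftrightarrow> (frac y \<in> A \<longleftrightarrow> even n)"
proof (induction n)
  case 0
  show ?case by simp
next
  case (Suc n)
  have "AE y in lebesgue. frac (y - \<alpha> - real n * \<alpha>) \<in> A \<longleftrightarrow> (frac (y - \<alpha>) \<in> A \<longleftrightarrow> even n)"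
    using AE_lebesgue_translate[OF Suc.IH, of \<alpha>] by simp
  with AE_torus_avoiding_complement[OF assms] show ?case
    by eventually_elim (auto simp: algebra_simps)
qed

lemma irrational_odd_multiple_approx:
  fixes \<alpha> \<eta> :: real
  assumes "\<alpha> \<notin> \<rat>" "\<eta> > 0"
  obtains n :: nat and h :: int where "odd n" "0 < real n * \<alpha> - of_int h" "real n * \<alpha> - of_int h < \<eta>"
proof -
  have "2 * \<alpha> \<notin> \<rat>"
    using assms(1) Rats_divide[of "2 * \<alpha>" 2] by auto
  then obtain h k where "k > 0" and hk: "\<bar>of_int k * (2 * \<alpha>) - of_int h - (\<eta>/2 - \<alpha>)\<bar> < \<eta>/2"
    using sequence_of_fractional_parts_is_dense assms(2) by (metis half_gt_zero)
  have "real (nat (2 * k + 1)) * \<alpha> - of_int h = of_int k * (2 * \<alpha>) - of_int h - (\<eta>/2 - \<alpha>) + \<eta>/2"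
    using \<open>k > 0\<close> by (simp add: algebra_simps)
  then have "0 < real (nat (2 * k + 1)) * \<alpha> - of_int h" "real (nat (2 * k + 1)) * \<alpha> - of_int h < \<eta>"
    using hk unfolding abs_less_iff by linarith+
  moreover have "odd (nat (2 * k + 1))"
    using \<open>k > 0\<close> by (simp add: even_nat_iff)
  ultimately show thesis using that by blast
qed

lemma measure_torus_avoiding_singleton_ne_half:
  assumes "torus_avoiding {\<alpha>} A" "0 \<le> \<alpha>" "\<alpha> < 1" "\<alpha> \<notin> \<rat>"
  shows "measure lebesgue A \<noteq> 1/2"
proof
  assume half: "measure lebesgue A = 1/2"
  have A: "A \<in> lmeasurable" "bounded A" "A \<subseteq> {0..<1}"
    using assms(1) torus_avoiding_measurable by (auto simp: torus_avoiding_def)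
  obtain \<eta> where "\<eta> > 0" and steinhaus: "\<And>s. norm s < \<eta> \<Longrightarrow> 0 < measure lebesgue (A \<inter> (+) s ` A)"
    using Steinhaus[OF A(1,2)] half by auto
  obtain n h where "odd n" and s: "0 < real n * \<alpha> - of_int h" "real n * \<alpha> - of_int h < \<eta>"
    using irrational_odd_multiple_approx[OF assms(4) \<open>\<eta> > 0\<close>] .
  define s where "s = real n * \<alpha> - of_int h"
  obtain N where "negligible N"
    and N: "{y. \<not> (frac (y - real n * \<alpha>) \<in> A \<longleftrightarrow> (frac y \<in> A \<longleftrightarrow> even n))} \<subseteq> N"
    using AE_torus_avoiding_parity[OF assms(1-3) half, of n]
    unfolding eventually_ae_filter_negligible by blast
  have "A \<inter> (+) s ` A \<subseteq> N"
  proof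
    fix y assume "y \<in> A \<inter> (+) s ` A"
    then obtain z where "y \<in> A" "z \<in> A" "y = s + z" by auto
    moreover have "frac (y - real n * \<alpha>) = frac z"
    proof -
      have "y - real n * \<alpha> = z + of_int (- h)" using \<open>y = s + z\<close> by (simp add: s_def)
      then show ?thesis by (simp only: frac_add_of_int_right)
    qed
    ultimately have "frac y \<in> A" "frac (y - real n * \<alpha>) \<in> A"
      using A(3) by (auto simp: frac_eq)
    with \<open>odd n\<close> N show "y \<in> N" by auto
  qed
  then have "measure lebesgue (A \<inter> (+) s ` A) = 0"
    using \<open>negligible N\<close> negligible_subset negligible_imp_measure0 by blast
  with steinhaus[of s] s show False by (simp add: s_def)
qed

section \<open>Kronecker's theorem and a nearly optimal avoiding set\<close>

lemma abs_of_int_add_half_ge: "1/2 \<le> \<bar>of_int m + 1/2 :: real\<bar>"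
  by (cases "m \<ge> 0") (auto simp: abs_if)

lemma one_Q_lin_indep_imp_irrational:
  assumes "finite D" "one_Q_lin_indep D" "a \<in> D"
  shows "a \<notin> \<rat>"
proof
  assume "a \<in> \<rat>"
  then obtain q where q: "a = of_rat q" by (auto elim: Rats_cases)
  define c where "c = (\<lambda>x::real. if x = a then (1::rat) else 0)"
  have "(\<Sum>x\<in>D. of_rat (c x) * x) = a"
    using assms(1,3) by (simp add: c_def if_distrib[of "\<lambda>r. of_rat r * _"] sum.delta cong: if_cong)
  then have "of_rat (- q) + (\<Sum>x\<in>D. of_rat (c x) * x) = 0" using q by (simp add: of_rat_minus)
  then have "c a = 0" using assms(2,3) unfolding one_Q_lin_indep_def by blast
  then show False by (simp add: c_def)
qed

lemma one_Q_lin_indep_imp_independent: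
  assumes fin: "finite D" and "1 \<notin> D" and li: "one_Q_lin_indep D"
  shows "module.independent (\<lambda>r x. of_int r * x) (insert (1::real) D)"
proof -
  interpret Modules.module "(\<lambda>r. (*) (real_of_int r))"
    by (simp add: Modules.module.intro distrib_left mult.commute)
  show ?thesis
    unfolding independent_explicit_module
  proof (intro allI impI)
    fix t u v
    assume t: "finite t" "t \<subseteq> insert 1 D" and zero: "(\<Sum>v\<in>t. real_of_int (u v) * v) = 0" and "v \<in> t"
    define u' where "u' = (\<lambda>x. if x \<in> t then u x else 0)"
    have "(\<Sum>v\<in>t. real_of_int (u v) * v) = (\<Sum>v\<in>insert 1 D. real_of_int (u' v) * v)"
      using t fin by (intro sum.mono_neutral_cong_left) (auto simp: u'_def)
    also have "\<dots> = of_rat (of_int (u' 1)) + (\<Sum>a\<in>D. of_rat (of_int (u' a)) * a)"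
      using fin \<open>1 \<notin> D\<close> by simp
    finally have "u' 1 = 0 \<and> (\<forall>a\<in>D. u' a = 0)"
      using li zero unfolding one_Q_lin_indep_def by (metis of_int_eq_0_iff)
    then show "u v = 0" using \<open>v \<in> t\<close> t(2) by (cases "v = 1") (force simp: u'_def)+
  qed
qed

lemma Kronecker_finite_set:
  fixes S :: "real set" and \<beta> :: "real \<Rightarrow> real"
  assumes "finite S" "1 \<notin> S" "module.independent (\<lambda>r x. of_int r * x) (insert 1 S)" "\<epsilon> > 0"
  obtains k :: int where "\<And>a. a \<in> S \<Longrightarrow> \<exists>j::int. \<bar>of_int k * a - of_int j - \<beta> a\<bar> < \<epsilon>"
proof -
  define n where "n = card S"
  obtain f where f: "bij_betw f {..<n} S"
    using ex_bij_betw_nat_finite[OF assms(1)] by (auto simp: n_def lessThan_atLeast0)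
  define \<theta> where "\<theta> = f(n := 1)"
  have \<theta>_lt: "\<theta> ` {..<n} = S"
    using f by (auto simp: \<theta>_def bij_betw_def)
  have "{..n} = insert n {..<n}" by auto
  then have im: "\<theta> ` {..n} = insert 1 S" and inj: "inj_on \<theta> {..n}"
    using \<theta>_lt f assms(2) by (auto simp: \<theta>_def bij_betw_def inj_on_def)
  obtain k m where km: "\<And>i. i < n \<Longrightarrow> \<bar>of_int k * \<theta> i - of_int (m i) - \<beta> (\<theta> i)\<bar> < \<epsilon>"
    using Kronecker_thm_2[of \<theta> n \<epsilon> "\<lambda>i. \<beta> (\<theta> i)"] assms(3,4) im inj by (auto simp: \<theta>_def)
  show thesis
  proof
    fix a assume "a \<in> S"
    then obtain i where "i < n" "a = \<theta> i" using \<theta>_lt by force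
    then show "\<exists>j::int. \<bar>of_int k * a - of_int j - \<beta> a\<bar> < \<epsilon>" using km by blast
  qed
qed

lemma Kronecker_half:
  assumes "finite D" "D \<noteq> {}" "1 \<notin> D" "one_Q_lin_indep D" "0 < \<epsilon>" "\<epsilon> \<le> 1/2"
  obtains K :: nat where "K > 0" "\<And>a. a \<in> D \<Longrightarrow> \<exists>j::int. \<bar>real K * a - of_int j - 1/2\<bar> < \<epsilon>"
proof -
  obtain k :: int where k: "\<And>a. a \<in> D \<Longrightarrow> \<exists>j::int. \<bar>of_int k * a - of_int j - 1/2\<bar> < \<epsilon>"
    using Kronecker_finite_set[OF assms(1,3) one_Q_lin_indep_imp_independent[OF assms(1,3,4)] assms(5),
      where \<beta> = "\<lambda>_. 1/2"] by blast
  have "\<exists>j::int. \<bar>of_int \<bar>k\<bar> * a - of_int j - 1/2\<bar> < \<epsilon>" if a: "a \<in> D" for a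
  proof -
    obtain j :: int where j: "\<bar>of_int k * a - of_int j - 1/2\<bar> < \<epsilon>" using k[OF a] by blast
    show ?thesis
    proof (cases "k \<ge> 0")
      case True
      then show ?thesis using j by auto
    next
      case False
      then have "of_int \<bar>k\<bar> * a - of_int (- j - 1) - 1/2 = - (of_int k * a - of_int j - 1/2 :: real)"
        by simp
      then show ?thesis using j by (metis abs_minus_cancel)
    qed
  qed
  moreover have "k \<noteq> 0"
  proof
    assume "k = 0"
    obtain a where "a \<in> D" using assms(2) by blast
    then obtain j :: int where j: "\<bar>of_int k * a - of_int j - 1/2\<bar> < \<epsilon>" using k by blast
    have "of_int k * a - of_int j - 1/2 = - (of_int j + 1/2 :: real)" using \<open>k = 0\<close> by simp
    then show False using j abs_of_int_add_half_ge[of j] assms(6) by (metis abs_minus_cancel not_less order_trans)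
  qed
  ultimately show thesis using that[of "nat \<bar>k\<bar>"] by simp
qed

definition spaced_intervals :: "nat \<Rightarrow> real \<Rightarrow> real set" where
  "spaced_intervals K c = (\<Union>j<K. {real j / real K ..< (real j + c) / real K})"

lemma mem_spaced_intervals_iff:
  "x \<in> spaced_intervals K c \<longleftrightarrow> (\<exists>j<K. real j \<le> real K * x \<and> real K * x < real j + c)"
  by (auto simp: spaced_intervals_def field_simps)

lemma spaced_intervals_subset:
  assumes "c \<le> 1"
  shows "spaced_intervals K c \<subseteq> {0..<1}"
proof
  fix x assume "x \<in> spaced_intervals K c"
  then obtain j where "j < K" "real j \<le> real K * x" "real K * x < real j + c"
    by (auto simp: mem_spaced_intervals_iff)
  then have "0 < real K" "0 \<le> real K * x" "real K * x < real K * 1" using assms by linarith+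
  then show "x \<in> {0..<1}" by (meson atLeastLessThan_iff mult_less_cancel_left_pos zero_le_mult_iff not_less)
qed

lemma frac_mult_spaced_intervals:
  assumes "c \<le> 1" "x \<in> spaced_intervals K c"
  shows "frac (real K * x) < c"
proof -
  obtain j where "j < K" "real j \<le> real K * x" "real K * x < real j + c"
    using assms(2) by (auto simp: mem_spaced_intervals_iff)
  moreover from this have "\<lfloor>real K * x\<rfloor> = int j" using assms(1) by (simp add: floor_eq_iff)
  ultimately show ?thesis by (simp add: frac_def)
qed

lemma measure_spaced_intervals:
  assumes "K > 0" "0 \<le> c" "c \<le> 1"
  shows "measure lborel (spaced_intervals K c) = c"
proof -
  define I where "I = (\<lambda>j::nat. {real j / real K ..< (real j + c) / real K})"
  have "disjoint_family_on I {..<K}"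
    unfolding disjoint_family_on_def
  proof (intro ballI impI)
    fix i j assume "i \<in> {..<K}" "j \<in> {..<K}" "i \<noteq> j"
    have "\<lfloor>real K * x\<rfloor> = int i" if "x \<in> I i" for i x
      using that assms by (simp add: I_def field_simps floor_eq_iff)
    with \<open>i \<noteq> j\<close> show "I i \<inter> I j = {}" by (metis disjoint_iff of_nat_eq_iff)
  qed
  moreover have "measure lborel (I j) = c / real K" for j
    using assms by (simp add: I_def divide_right_mono diff_divide_distrib[symmetric])
  ultimately have "measure lborel (\<Union>j<K. I j) = (\<Sum>j<K. c / real K)"
    using assms by (subst measure_finite_Union) (auto simp: I_def emeasure_lborel_Ico divide_right_mono)
  then show ?thesis using assms(1) by (simp add: spaced_intervals_def I_def)
qed

lemma torus_avoiding_spaced_intervals: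
  assumes "0 < \<epsilon>" "\<epsilon> < 1/2" and approx: "\<And>a. a \<in> D \<Longrightarrow> \<exists>j::int. \<bar>real K * a - of_int j - 1/2\<bar> < \<epsilon>"
  shows "torus_avoiding D (spaced_intervals K (1/2 - \<epsilon>))"
proof -
  define c where "c = 1/2 - \<epsilon>"
  have "c \<le> 1" using assms by (simp add: c_def)
  have "frac (x - y) \<notin> D" if "x \<in> spaced_intervals K c" "y \<in> spaced_intervals K c" for x y
  proof
    assume "frac (x - y) \<in> D"
    then obtain j :: int where j: "\<bar>real K * frac (x - y) - of_int j - 1/2\<bar> < \<epsilon>"
      using approx by blast
    \<comment> \<open>K (x - y) differs from K frac (x - y) by an integer, so the difference of the
       fractional parts of K x and K y is within \<epsilon> of a half-integer.\<close>
    define M where "M = j + int K * \<lfloor>x - y\<rfloor> - \<lfloor>real K * x\<rfloor> + \<lfloor>real K * y\<rfloor>"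
    have "frac (real K * x) - frac (real K * y)
        = (real K * frac (x - y) - of_int j - 1/2) + (of_int M + 1/2)"
      by (simp add: M_def frac_def algebra_simps)
    moreover have "\<bar>frac (real K * x) - frac (real K * y)\<bar> < c"
      using frac_mult_spaced_intervals[OF \<open>c \<le> 1\<close>] that frac_ge_0 by (smt (verit))
    ultimately show False
      using j abs_of_int_add_half_ge[of M] by (simp add: c_def)
  qed
  moreover have "spaced_intervals K c \<in> sets borel"
    by (auto simp: spaced_intervals_def)
  ultimately show ?thesis
    using spaced_intervals_subset[OF \<open>c \<le> 1\<close>] by (simp add: torus_avoiding_def c_def)
qed

lemma cSup_eq_of_approx:
  fixes S :: "real set"
  assumes upper: "\<And>x. x \<in> S \<Longrightarrow> x \<le> a" and approx: "\<And>e. e > 0 \<Longrightarrow> \<exists>x\<in>S. a - e < x"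
  shows "Sup S = a"
proof (rule cSup_eq_non_empty)
  show "S \<noteq> {}" using approx[of 1] by auto
  show "x \<le> a" if "x \<in> S" for x using upper that .
  show "a \<le> y" if "\<And>x. x \<in> S \<Longrightarrow> x \<le> y" for y
  proof (rule ccontr)
    assume "\<not> a \<le> y"
    then obtain x where "x \<in> S" "a - (a - y) < x" using approx[of "a - y"] by auto
    with that show False by fastforce
  qed
qed

theorem mainTheorem15:
  fixes D :: "real set"
  assumes "finite D" and "D \<noteq> {}" and "D \<subseteq> {0<..<1}"
    and "one_Q_lin_indep D"
  shows "Md_T D = 1/2 \<and> \<not> (\<exists>A. torus_avoiding D A \<and> measure lborel A = 1/2)"
proof -
  obtain \<alpha> where "\<alpha> \<in> D" using assms(2) by blast
  then have \<alpha>: "0 \<le> \<alpha>" "\<alpha> < 1" "\<alpha> \<notin> \<rat>"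
    using assms(3) one_Q_lin_indep_imp_irrational[OF assms(1,4)] by auto
  have upper: "measure lborel A \<le> 1/2 \<and> measure lborel A \<noteq> 1/2" if "torus_avoiding D A" for A
  proof -
    have "torus_avoiding {\<alpha>} A" using torus_avoiding_mono[OF that, of "{\<alpha>}"] \<open>\<alpha> \<in> D\<close> by simp
    then show ?thesis
      using measure_torus_avoiding_singleton_le measure_torus_avoiding_singleton_ne_half \<alpha>
        torus_avoiding_measurable(3)[OF that] by simp
  qed
  have lower: "\<exists>x\<in>{measure lborel A | A. torus_avoiding D A}. 1/2 - e < x" if "e > 0" for e
  proof -
    define \<epsilon> where "\<epsilon> = min (e/2) (1/4)"
    have \<epsilon>: "0 < \<epsilon>" "\<epsilon> < 1/2" "\<epsilon> < e" using that by (auto simp: \<epsilon>_def)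
    have "1 \<notin> D" using assms(3) by auto
    then obtain K where "K > 0" "\<And>a. a \<in> D \<Longrightarrow> \<exists>j::int. \<bar>real K * a - of_int j - 1/2\<bar> < \<epsilon>"
      using Kronecker_half[OF assms(1,2) _ assms(4)] \<epsilon> by (metis less_imp_le)
    then have "torus_avoiding D (spaced_intervals K (1/2 - \<epsilon>))"
      "measure lborel (spaced_intervals K (1/2 - \<epsilon>)) = 1/2 - \<epsilon>"
      using torus_avoiding_spaced_intervals measure_spaced_intervals \<epsilon> by auto
    then show ?thesis using \<epsilon>(3) by force
  qed
  have "Md_T D = 1/2"
    unfolding Md_T_def using upper lower by (intro cSup_eq_of_approx) auto
  then show ?thesis using upper by blast
qed

end
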